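(* For any integer $t>0$, any integer-valued function $f$ with $f(n)\in O(n^t)$, and any desired bound $\varepsilon_{\mathrm{premature}}>0$, there exists a (two-way) probabilistic finite automaton whose expected runtime on inputs of length $n$ is in $O(n^{t+1})$, and such that, on every input of length $n$, the probability that this machine halts in fewer than $f(n)$ time-steps is at most $\varepsilon_{\mathrm{premature}}$.
   Context: A (two-way) probabilistic finite automaton is a finite-state machine with a single read-only head on an input tape containing $\rhd w\lhd$ (with $\rhd,\lhd$ end-markers), starting on $\rhd$, which in each step may flip a fair coin and, depending on its state, the scanned symbol and the coin outcome, changes state and moves its head one cell left, right, or not at all; it has no work tape and no interaction with any other party. $n$ denotes the length of the input string $w$. *)

theory Defs
  imports "HOL-Probability.Probability" "HOL-Library.Landau_Symbols"
begin

datatype 'a tsym = LEnd | REnd | Sym 'a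

text \<open>The transition function takes the current state, scanned symbol and the
  outcome of a fair coin flip, and returns the new state and a head move
  in {-1,0,1}.\<close>
record 'a pfa =
  states :: "nat set"
  init   :: nat
  halting :: "nat set"
  delta  :: "nat \<Rightarrow> 'a tsym \<Rightarrow> bool \<Rightarrow> nat \<times> int"

definition valid_pfa :: "'a pfa \<Rightarrow> bool" where
  "valid_pfa M \<longleftrightarrow>
     finite (states M) \<and> init M \<in> states M \<and> halting M \<subseteq> states M \<and>
     (\<forall>q\<in>states M. \<forall>s b. fst (delta M q s b) \<in> states M
         \<and> snd (delta M q s b) \<in> {-1, 0, 1}) \<and>
     (\<forall>q\<in>states M. \<forall>b. snd (delta M q LEnd b) \<noteq> -1) \<and>
     (\<forall>q\<in>states M. \<forall>b. snd (delta M q REnd b) \<noteq> 1)"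

definition tape :: "'a list \<Rightarrow> nat \<Rightarrow> 'a tsym" where
  "tape w i = (if i = 0 then LEnd else if i \<le> length w then Sym (w ! (i - 1)) else REnd)"

text \<open>One step on configuration (state, head position); halting configurations are absorbing.\<close>
definition step :: "'a pfa \<Rightarrow> 'a list \<Rightarrow> nat \<times> nat \<Rightarrow> (nat \<times> nat) pmf" where
  "step M w c = (if fst c \<in> halting M then return_pmf c
     else map_pmf (\<lambda>b. let r = delta M (fst c) (tape w (snd c)) b
                        in (fst r, nat (int (snd c) + snd r))) (bernoulli_pmf (1/2)))"

fun run :: "'a pfa \<Rightarrow> 'a list \<Rightarrow> nat \<Rightarrow> (nat \<times> nat) pmf" where
  "run M w 0 = return_pmf (init M, 0)"
| "run M w (Suc k) = bind_pmf (run M w k) (step M w)"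

text \<open>Probability that the machine has halted within k steps, i.e. Pr[T \<le> k],
  where T is the (possibly infinite) halting time.\<close>
definition halt_within :: "'a pfa \<Rightarrow> 'a list \<Rightarrow> nat \<Rightarrow> real" where
  "halt_within M w k = measure_pmf.prob (run M w k) {c. fst c \<in> halting M}"

definition halt_before :: "'a pfa \<Rightarrow> 'a list \<Rightarrow> int \<Rightarrow> real" where
  "halt_before M w m = (if m \<le> 0 then 0 else halt_within M w (nat m - 1))"

text \<open>Expected runtime E[T] = \<Sum>_{k\<ge>0} Pr[T > k] (in [0,\<infinity>]; it is \<infinity> if the
  machine fails to halt with positive probability).\<close>
definition expected_runtime :: "'a pfa \<Rightarrow> 'a list \<Rightarrow> ennreal" where
  "expected_runtime M w = (\<Sum>k. ennreal (1 - halt_within M w k))"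

end

theory Submission
  imports Defs
begin

text \<open>The automaton climbs a ladder of T fair random walks. Each walk starts next to the left
  end-marker; it succeeds when it reaches the right end-marker, which happens with probability
  1/(n+1), and any failure sends the machine back to the bottom of the ladder. Halting therefore
  needs T successes in a row: about (n+1)^T attempts, each of expected length O(n), give the
  expected runtime O(n^(T+1)). Conversely, the probability of halting within k steps is at most
  (2N + k) / ((2N + 1) N^T) with N = n + 1, which is below eps once k \<le> K n^T and n is large;
  the finitely many remaining input lengths are covered by an initial delay of D steps.
  Both bounds come from potential functions on configurations whose expected change per step
  is controlled.\<close>

definition wf_config :: "'a pfa \<Rightarrow> 'a list \<Rightarrow> nat \<times> nat \<Rightarrow> bool" where
  "wf_config M w c \<longleftrightarrow> fst c \<in> states M \<and> snd c \<le> length w + 1"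

definition next_config :: "'a pfa \<Rightarrow> 'a list \<Rightarrow> nat \<times> nat \<Rightarrow> bool \<Rightarrow> nat \<times> nat" where
  "next_config M w c b =
     (let r = delta M (fst c) (tape w (snd c)) b in (fst r, nat (int (snd c) + snd r)))"

lemma step_halting: "fst c \<in> halting M \<Longrightarrow> step M w c = return_pmf c"
  by (simp add: step_def)

lemma step_nonhalting:
  "fst c \<notin> halting M \<Longrightarrow> step M w c = map_pmf (next_config M w c) (bernoulli_pmf (1/2))"
  by (simp add: step_def next_config_def[abs_def])

lemma wf_config_next_config:
  assumes M: "valid_pfa M" and c: "wf_config M w c"
  shows "wf_config M w (next_config M w c b)"
proof -
  define r where "r = delta M (fst c) (tape w (snd c)) b"
  have q: "fst c \<in> states M" and x: "snd c \<le> length w + 1"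
    using c by (simp_all add: wf_config_def)
  have "fst r \<in> states M" and move: "snd r \<in> {-1, 0, 1}"
    using M q by (auto simp: valid_pfa_def r_def)
  moreover have "snd c = 0 \<Longrightarrow> snd r \<noteq> -1" and "snd c = length w + 1 \<Longrightarrow> snd r \<noteq> 1"
    using M q by (auto simp: valid_pfa_def r_def tape_def)
  ultimately have "nat (int (snd c) + snd r) \<le> length w + 1"
    using x by (cases "snd c = length w + 1") (auto simp: nat_le_iff)
  then show ?thesis
    using \<open>fst r \<in> states M\<close> by (simp add: wf_config_def next_config_def r_def[symmetric])
qed

lemma wf_config_run:
  assumes M: "valid_pfa M" and c: "c \<in> set_pmf (run M w k)"
  shows "wf_config M w c"
  using c
proof (induction k arbitrary: c)
  case 0
  then show ?case using M by (simp add: wf_config_def valid_pfa_def)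
next
  case (Suc k)
  then obtain d where d: "d \<in> set_pmf (run M w k)" "c \<in> set_pmf (step M w d)"
    by auto
  have d_wf: "wf_config M w d"
    using Suc.IH d(1) .
  then show ?case
    using d(2) wf_config_next_config[OF M d_wf]
    by (cases "fst d \<in> halting M") (auto simp: step_halting step_nonhalting)
qed

lemma prob_not_halted:
  "ennreal (1 - halt_within M w k) = (\<integral>\<^sup>+c. indicator {c. fst c \<notin> halting M} c \<partial>run M w k)"
proof -
  have "1 - halt_within M w k = measure_pmf.prob (run M w k) {c. fst c \<notin> halting M}"
    unfolding halt_within_def
    using measure_pmf.prob_compl[of "{c. fst c \<in> halting M}" "run M w k"] by (simp add: set_diff_eq)
  then show ?thesis
    by (simp add: measure_pmf.emeasure_eq_measure Compl_eq)
qed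

text \<open>With a = 0 this bounds the halting probability, with a = 1 and d = 0 the expected runtime.\<close>
lemma potential_run_le:
  fixes U :: "nat \<times> nat \<Rightarrow> ennreal"
  assumes M: "valid_pfa M"
    and drift: "\<And>c. wf_config M w c \<Longrightarrow> fst c \<notin> halting M \<Longrightarrow>
                  (\<integral>\<^sup>+y. U y \<partial>step M w c) + a \<le> U c + d"
  shows "(\<Sum>k<K. a * ennreal (1 - halt_within M w k)) + (\<integral>\<^sup>+y. U y \<partial>run M w K)
           \<le> U (init M, 0) + of_nat K * d"
proof (induction K)
  case 0
  then show ?case by simp
next
  case (Suc K)
  have pointwise:
      "a * indicator {c. fst c \<notin> halting M} c + (\<integral>\<^sup>+y. U y \<partial>step M w c) \<le> U c + d"
    if "c \<in> set_pmf (run M w K)" for c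
  proof (cases "fst c \<in> halting M")
    case True
    then show ?thesis by (simp add: step_halting)
  next
    case False
    then show ?thesis
      using drift[OF wf_config_run[OF M that] False] by (simp add: add.commute)
  qed
  have "a * ennreal (1 - halt_within M w K) + (\<integral>\<^sup>+y. U y \<partial>run M w (Suc K))
      = (\<integral>\<^sup>+c. a * indicator {c. fst c \<notin> halting M} c + (\<integral>\<^sup>+y. U y \<partial>step M w c) \<partial>run M w K)"
    by (simp add: prob_not_halted nn_integral_add nn_integral_cmult)
  also have "\<dots> \<le> (\<integral>\<^sup>+c. U c + d \<partial>run M w K)"
    using pointwise by (intro nn_integral_mono_AE) (simp add: AE_measure_pmf_iff)
  also have "\<dots> = (\<integral>\<^sup>+c. U c \<partial>run M w K) + d"
    by (simp add: nn_integral_add measure_pmf.emeasure_space_1)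
  finally have "a * ennreal (1 - halt_within M w K) + (\<integral>\<^sup>+y. U y \<partial>run M w (Suc K))
      \<le> (\<integral>\<^sup>+c. U c \<partial>run M w K) + d" .
  then have "(\<Sum>k<Suc K. a * ennreal (1 - halt_within M w k)) + (\<integral>\<^sup>+y. U y \<partial>run M w (Suc K))
      \<le> (\<Sum>k<K. a * ennreal (1 - halt_within M w k)) + (\<integral>\<^sup>+c. U c \<partial>run M w K) + d"
    by (simp add: add.assoc add_left_mono)
  also have "\<dots> \<le> U (init M, 0) + of_nat K * d + d"
    using Suc.IH by (rule add_right_mono)
  finally show ?case
    by (simp add: algebra_simps)
qed

lemma nn_integral_step_nonhalting:
  fixes u :: "nat \<times> nat \<Rightarrow> real"
  assumes "fst c \<notin> halting M"
    and "0 \<le> u (next_config M w c True)" "0 \<le> u (next_config M w c False)"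
  shows "(\<integral>\<^sup>+y. ennreal (u y) \<partial>step M w c)
           = ennreal ((u (next_config M w c True) + u (next_config M w c False)) / 2)"
proof -
  have "(\<integral>\<^sup>+y. ennreal (u y) \<partial>step M w c)
      = ennreal (u (next_config M w c True)) / 2 + ennreal (u (next_config M w c False)) / 2"
    unfolding step_nonhalting[OF assms(1)]
    by (subst nn_integral_map_pmf, subst nn_integral_measure_pmf_support[of UNIV])
       (auto simp: UNIV_bool ennreal_divide_times divide_ennreal_def mult.commute)
  also have "\<dots> = ennreal ((u (next_config M w c True) + u (next_config M w c False)) / 2)"
    using assms(2,3) by (simp add: divide_ennreal[symmetric] ennreal_plus[symmetric] add_divide_distrib)
  finally show ?thesis .
qed

lemma halt_within_le_potential:
  fixes u :: "nat \<times> nat \<Rightarrow> real"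
  assumes M: "valid_pfa M" and "0 \<le> d"
    and nonneg: "\<And>c. wf_config M w c \<Longrightarrow> 0 \<le> u c"
    and halting: "\<And>c. wf_config M w c \<Longrightarrow> fst c \<in> halting M \<Longrightarrow> 1 \<le> u c"
    and drift: "\<And>c. wf_config M w c \<Longrightarrow> fst c \<notin> halting M \<Longrightarrow>
                  u (next_config M w c True) + u (next_config M w c False) \<le> 2 * (u c + d)"
  shows "halt_within M w k \<le> u (init M, 0) + real k * d"
proof -
  have init: "wf_config M w (init M, 0)"
    using M by (simp add: wf_config_def valid_pfa_def)
  have "(\<integral>\<^sup>+y. ennreal (u y) \<partial>step M w c) + 0 \<le> ennreal (u c) + ennreal d"
    if c: "wf_config M w c" and "fst c \<notin> halting M" for c
    using drift[OF that] nonneg[OF wf_config_next_config[OF M c]] nonneg[OF c] \<open>0 \<le> d\<close>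
    by (simp add: nn_integral_step_nonhalting[OF that(2)] ennreal_plus[symmetric] del: ennreal_plus)
  from potential_run_le[OF M this, of k]
  have "(\<integral>\<^sup>+y. ennreal (u y) \<partial>run M w k) \<le> ennreal (u (init M, 0) + real k * d)"
    using nonneg[OF init] \<open>0 \<le> d\<close>
    by (simp add: ennreal_plus ennreal_mult ennreal_of_nat_eq_real_of_nat)
  moreover have "ennreal (halt_within M w k) \<le> (\<integral>\<^sup>+y. ennreal (u y) \<partial>run M w k)"
  proof -
    have "ennreal (halt_within M w k) = (\<integral>\<^sup>+c. indicator {c. fst c \<in> halting M} c \<partial>run M w k)"
      by (simp add: halt_within_def measure_pmf.emeasure_eq_measure)
    also have "\<dots> \<le> (\<integral>\<^sup>+y. ennreal (u y) \<partial>run M w k)"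
      using wf_config_run[OF M] halting nonneg
      by (intro nn_integral_mono_AE) (auto simp: AE_measure_pmf_iff indicator_def)
    finally show ?thesis .
  qed
  ultimately have "ennreal (halt_within M w k) \<le> ennreal (u (init M, 0) + real k * d)"
    by (rule order_trans[rotated])
  then show ?thesis
    using nonneg[OF init] \<open>0 \<le> d\<close> by (subst (asm) ennreal_le_iff) auto
qed

lemma expected_runtime_le_potential:
  fixes v :: "nat \<times> nat \<Rightarrow> real"
  assumes M: "valid_pfa M"
    and nonneg: "\<And>c. wf_config M w c \<Longrightarrow> 0 \<le> v c"
    and drift: "\<And>c. wf_config M w c \<Longrightarrow> fst c \<notin> halting M \<Longrightarrow>
                  v (next_config M w c True) + v (next_config M w c False) + 2 \<le> 2 * v c"
  shows "expected_runtime M w \<le> ennreal (v (init M, 0))"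
  unfolding expected_runtime_def
proof (rule suminf_le_const)
  have potential_drift: "(\<integral>\<^sup>+y. ennreal (v y) \<partial>step M w c) + 1 \<le> ennreal (v c) + 0"
    if c: "wf_config M w c" and "fst c \<notin> halting M" for c
  proof -
    have "(\<integral>\<^sup>+y. ennreal (v y) \<partial>step M w c) + 1
        = ennreal ((v (next_config M w c True) + v (next_config M w c False)) / 2 + 1)"
      using nonneg[OF wf_config_next_config[OF M c]]
      by (simp add: nn_integral_step_nonhalting[OF that(2)] ennreal_plus)
    also have "\<dots> \<le> ennreal (v c)"
      using drift[OF that] by (intro ennreal_leI) (simp add: field_simps)
    finally show ?thesis by simp
  qed
  fix K
  have "(\<Sum>k<K. 1 * ennreal (1 - halt_within M w k)) + (\<integral>\<^sup>+y. ennreal (v y) \<partial>run M w K)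
      \<le> ennreal (v (init M, 0)) + of_nat K * 0"
    using potential_drift by (rule potential_run_le[OF M])
  then have "(\<Sum>k<K. ennreal (1 - halt_within M w k)) + (\<integral>\<^sup>+y. ennreal (v y) \<partial>run M w K)
      \<le> ennreal (v (init M, 0))"
    by simp
  then show "(\<Sum>k<K. ennreal (1 - halt_within M w k)) \<le> ennreal (v (init M, 0))"
    by (rule order_trans[rotated]) simp
qed simp

text \<open>State 1 sweeps right and, at the right end-marker, starts the return to
  level 0. State 2 + j (j < T) is the fair random walk of level j: at the left end-marker it
  fails and falls back to state 1, at the right end-marker it climbs to level j + 1, or halts
  if j = T - 1. State 2 + T + j sweeps left and starts the walk of level j on cell 1. States
  2 + 2T + D, ..., 2 + 2T + 1 form the initial delay, and 2 + 2T enters level 0.\<close>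
definition ladder_delta :: "nat \<Rightarrow> nat \<Rightarrow> nat \<Rightarrow> 'a tsym \<Rightarrow> bool \<Rightarrow> nat \<times> int" where
  "ladder_delta T D q s b =
    (if q = 1 then (if s = REnd then (2 + T, -1) else (1, 1))
     else if 2 \<le> q \<and> q < 2 + T then
       (if s = LEnd then (1, 1)
        else if s = REnd then (if q + 1 = 2 + T then (0, 0) else (q + T + 1, -1))
        else (q, if b then 1 else -1))
     else if 2 + T \<le> q \<and> q < 2 + 2 * T then (if s = LEnd then (q - T, 1) else (q, -1))
     else if 2 + 2 * T \<le> q \<and> q \<le> 2 + 2 * T + D then
       (if q = 2 + 2 * T then (2 + T, 0) else (q - 1, 0))
     else (0, 0))"

definition ladder_pfa :: "nat \<Rightarrow> nat \<Rightarrow> 'a pfa" where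
  "ladder_pfa T D =
     \<lparr>states = {0..2 + 2 * T + D}, init = 2 + 2 * T + D, halting = {0}, delta = ladder_delta T D\<rparr>"

lemma ladder_pfa_simps [simp]:
  "states (ladder_pfa T D) = {0..2 + 2 * T + D}"
  "init (ladder_pfa T D) = 2 + 2 * T + D"
  "halting (ladder_pfa T D) = {0}"
  "delta (ladder_pfa T D) = ladder_delta T D"
  by (simp_all add: ladder_pfa_def)

lemma valid_ladder_pfa: "valid_pfa (ladder_pfa T D :: 'a pfa)"
proof -
  have "fst (ladder_delta T D q (s :: 'a tsym) b) \<le> 2 + 2 * T + D" if "q \<le> 2 + 2 * T + D" for q s b
    using that by (auto simp: ladder_delta_def)
  moreover have "snd (ladder_delta T D q (s :: 'a tsym) b) \<in> {-1, 0, 1}" for q s b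
    by (simp add: ladder_delta_def)
  moreover have "snd (ladder_delta T D q (LEnd :: 'a tsym) b) \<noteq> -1"
    and "snd (ladder_delta T D q (REnd :: 'a tsym) b) \<noteq> 1" for q b
    by (simp_all add: ladder_delta_def)
  ultimately show ?thesis
    by (auto simp: valid_pfa_def)
qed

text \<open>The state is a variable constrained by a premise, so that these rules still apply after
  simp has rewritten 2 + j to Suc (Suc j).\<close>
lemma next_config_ladder_rewind:
  "q = 1 \<Longrightarrow> x \<le> length w + 1 \<Longrightarrow> next_config (ladder_pfa T D) w (q, x) b
     = (if x = length w + 1 then (2 + T, length w) else (1, x + 1))"
  by (auto simp: next_config_def ladder_delta_def tape_def)

lemma next_config_ladder_walk:
  "q = 2 + j \<Longrightarrow> j < T \<Longrightarrow> x \<le> length w + 1 \<Longrightarrow> next_config (ladder_pfa T D) w (q, x) b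
     = (if x = 0 then (1, 1)
        else if x = length w + 1 then (if j + 1 = T then (0, x) else (2 + T + (j + 1), length w))
        else (q, if b then x + 1 else x - 1))"
  by (auto simp: next_config_def ladder_delta_def tape_def)

lemma next_config_ladder_return:
  "q = 2 + T + j \<Longrightarrow> j < T \<Longrightarrow> next_config (ladder_pfa T D) w (q, x) b
     = (if x = 0 then (2 + j, 1) else (q, x - 1))"
  by (auto simp: next_config_def ladder_delta_def tape_def)

lemma next_config_ladder_delay:
  "2 + 2 * T \<le> q \<Longrightarrow> q \<le> 2 + 2 * T + D \<Longrightarrow> next_config (ladder_pfa T D) w (q, x) b
     = (if q = 2 + 2 * T then (2 + T, x) else (q - 1, x))"
  by (auto simp: next_config_def ladder_delta_def)

lemma ladder_state_cases:
  fixes T q :: nat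
  assumes "q \<noteq> 0"
  obtains "q = 1" | j where "j < T" "q = 2 + j" | j where "j < T" "q = 2 + T + j" | "2 + 2 * T \<le> q"
proof -
  consider "q = 1" | "2 \<le> q" "q < 2 + T" | "2 + T \<le> q" "q < 2 + 2 * T" | "2 + 2 * T \<le> q"
    using assms by linarith
  then show thesis
    using that(2)[of "q - 2"] that(3)[of "q - (2 + T)"] that(1,4) by cases auto
qed

lemma next_config_ladder_cases:
  fixes T D q x :: nat and w :: "'a list"
  defines "succ_cfg \<equiv> next_config (ladder_pfa T D) w"
  assumes wf: "wf_config (ladder_pfa T D) w (q, x)" and "q \<noteq> 0"
  obtains
    (rewind) "q = 1" "x \<le> length w" "\<And>b. succ_cfg (q, x) b = (1, x + 1)"
  | (rewind_end) "q = 1" "x = length w + 1" "\<And>b. succ_cfg (q, x) b = (2 + T, length w)"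
  | (walk_fail) j where "j < T" "q = 2 + j" "x = 0" "\<And>b. succ_cfg (q, x) b = (1, 1)"
  | (walk_success_last) j where "j + 1 = T" "q = 2 + j" "x = length w + 1"
      "\<And>b. succ_cfg (q, x) b = (0, x)"
  | (walk_success) j where "j + 1 < T" "q = 2 + j" "x = length w + 1"
      "\<And>b. succ_cfg (q, x) b = (2 + T + (j + 1), length w)"
  | (walk) j where "j < T" "q = 2 + j" "0 < x" "x \<le> length w"
      "succ_cfg (q, x) True = (q, x + 1)" "succ_cfg (q, x) False = (q, x - 1)"
  | (return_end) j where "j < T" "q = 2 + T + j" "x = 0" "\<And>b. succ_cfg (q, x) b = (2 + j, 1)"
  | (return) j where "j < T" "q = 2 + T + j" "0 < x" "\<And>b. succ_cfg (q, x) b = (q, x - 1)"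
  | (delay_end) "q = 2 + 2 * T" "\<And>b. succ_cfg (q, x) b = (2 + T, x)"
  | (delay) "2 + 2 * T < q" "\<And>b. succ_cfg (q, x) b = (q - 1, x)"
proof -
  have x: "x \<le> length w + 1" and q: "q \<le> 2 + 2 * T + D"
    using wf by (simp_all add: wf_config_def)
  from \<open>q \<noteq> 0\<close> show thesis
  proof (cases rule: ladder_state_cases[where T = T])
    case 1
    then show thesis
      using x by (cases "x = length w + 1")
        (auto intro: rewind rewind_end simp: succ_cfg_def next_config_ladder_rewind)
  next
    case (2 j)
    then show thesis
      using x by (cases "x = 0"; cases "x = length w + 1"; cases "j + 1 = T")
        (auto intro: walk_fail[of j] walk_success_last[of j] walk_success[of j] walk[of j]
          simp: succ_cfg_def next_config_ladder_walk)
  next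
    case (3 j)
    then show thesis
      by (cases "x = 0")
        (auto intro: return_end[of j] return[of j] simp: succ_cfg_def next_config_ladder_return)
  next
    case 4
    then show thesis
      using q by (cases "q = 2 + 2 * T")
        (auto intro: delay_end delay simp: succ_cfg_def next_config_ladder_delay)
  qed
qed

text \<open>On the walk of level j the potential x (2N + 1) N^j is a martingale; its value at the right
  end-marker is the weight (2N + 1) N^(j+1) of the next level, or the halting value for the top
  level. All other moves raise the potential by at most one.\<close>
definition halt_potential :: "nat \<Rightarrow> nat \<Rightarrow> nat \<times> nat \<Rightarrow> real" where
  "halt_potential T n c = (let q = fst c; x = real (snd c); N = real n + 1 in
     if q = 0 then (2 * N + 1) * N ^ T
     else if q = 1 then x
     else if q < 2 + T then x * (2 * N + 1) * N ^ (q - 2)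
     else if q < 2 + 2 * T then (2 * N + 1) * N ^ (q - 2 - T) - 1 - x
     else 2 * N)"

lemma halt_potential_nonneg:
  assumes "wf_config (ladder_pfa T D) w c"
  shows "0 \<le> halt_potential T (length w) c"
proof -
  define N where "N = real (length w) + 1"
  have "real (snd c) \<le> N" and "1 \<le> N"
    using assms by (simp_all add: wf_config_def N_def)
  moreover have "N \<le> (2 * N + 1) * N ^ k - 1" for k
  proof -
    have "2 * N + 1 \<le> (2 * N + 1) * N ^ k"
      using \<open>1 \<le> N\<close> by (simp add: mult_le_cancel_left1 one_le_power)
    then show ?thesis using \<open>1 \<le> N\<close> by linarith
  qed
  ultimately show ?thesis
    by (auto simp: halt_potential_def N_def[symmetric] Let_def intro: order_trans[rotated])
qed

lemma halt_potential_drift: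
  fixes w :: "'a list"
  assumes "0 < T" and wf: "wf_config (ladder_pfa T D) w c" and "fst c \<noteq> 0"
  defines "succ_cfg \<equiv> next_config (ladder_pfa T D) w"
  shows "halt_potential T (length w) (succ_cfg c True)
           + halt_potential T (length w) (succ_cfg c False)
           \<le> 2 * halt_potential T (length w) c + 2"
proof -
  obtain q x where c: "c = (q, x)" by force
  have "q \<noteq> 0" using \<open>fst c \<noteq> 0\<close> by (simp add: c)
  from wf[unfolded c] this show ?thesis
    unfolding c succ_cfg_def
    by (cases rule: next_config_ladder_cases)
       (use \<open>0 < T\<close> in \<open>auto simp: halt_potential_def Let_def algebra_simps\<close>)
qed

fun walk_slope :: "real \<Rightarrow> nat \<Rightarrow> real" where
  "walk_slope N 0 = 1"
| "walk_slope N (Suc j) = N * walk_slope N j + 2 * N"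

lemma walk_slope_nonneg: "0 \<le> N \<Longrightarrow> 0 \<le> walk_slope N j"
  by (induction j) auto

lemma walk_slope_mono:
  assumes "1 \<le> N" and "j \<le> k"
  shows "walk_slope N j \<le> walk_slope N k"
proof (rule lift_Suc_mono_le[OF _ \<open>j \<le> k\<close>])
  fix i
  have "walk_slope N i \<le> N * walk_slope N i"
    using assms(1) walk_slope_nonneg[of N i] by (simp add: mult_le_cancel_right1)
  then show "walk_slope N i \<le> walk_slope N (Suc i)"
    using assms(1) by simp
qed

lemma walk_slope_le:
  assumes "1 \<le> N"
  shows "walk_slope N j \<le> (2 * real j + 1) * N ^ j"
proof (induction j)
  case 0
  then show ?case by simp
next
  case (Suc j)
  have "N \<le> N ^ Suc j"
    using assms by (simp add: one_le_power)
  then have "N * walk_slope N j + 2 * N \<le> N * ((2 * real j + 1) * N ^ j) + 2 * N ^ Suc j"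
    using Suc.IH assms by (intro add_mono mult_left_mono) auto
  then show ?case
    by (simp add: algebra_simps)
qed

text \<open>Every deterministic move lowers the potential by exactly one; on the walk of level j the
  term x (N - x) pays for the expected duration of the walk, and the slopes are chosen so that
  entering a level from either side costs exactly one step.\<close>
definition runtime_potential :: "nat \<Rightarrow> nat \<Rightarrow> nat \<times> nat \<Rightarrow> real" where
  "runtime_potential T n c = (let q = fst c; x = real (snd c); N = real n + 1;
        r = walk_slope N T * N + N + 1 in
     if q = 0 then 0
     else if q = 1 then r - x
     else if q < 2 + T then r - walk_slope N (q - 1) * x + x * (N - x)
     else if q < 2 + 2 * T then r - walk_slope N (q - 2 - T) * N - N + x
     else r - 2 * N + real (q - (2 + 2 * T)) + 1 + x)"

lemma runtime_potential_nonneg: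
  assumes "wf_config (ladder_pfa T D) w c"
  shows "0 \<le> runtime_potential T (length w) c"
proof -
  define N where "N = real (length w) + 1"
  have x: "real (snd c) \<le> N" and "1 \<le> N"
    using assms by (simp_all add: wf_config_def N_def)
  have slope: "0 \<le> walk_slope N k" "walk_slope N k \<le> walk_slope N T" if "k \<le> T" for k
    using \<open>1 \<le> N\<close> that walk_slope_nonneg walk_slope_mono by auto
  have "1 \<le> walk_slope N T"
    using slope(2)[of 0] by simp
  then have "N \<le> walk_slope N T * N"
    using \<open>1 \<le> N\<close> by (simp add: mult_le_cancel_right1)
  moreover have "walk_slope N (fst c - 1) * real (snd c) \<le> walk_slope N T * N" if "fst c < 2 + T"
    using slope[of "fst c - 1"] slope[of T] that x by (intro mult_mono) auto
  moreover have "walk_slope N (fst c - 2 - T) * N \<le> walk_slope N T * N" if "fst c < 2 + 2 * T"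
    using slope[of "fst c - 2 - T"] that \<open>1 \<le> N\<close> by (intro mult_right_mono) auto
  moreover have "0 \<le> real (snd c) * (N - real (snd c))"
    using x by simp
  ultimately show ?thesis
    using x by (auto simp: runtime_potential_def N_def[symmetric] Let_def)
qed

lemma runtime_potential_drift:
  fixes w :: "'a list"
  assumes "0 < T" and wf: "wf_config (ladder_pfa T D) w c" and "fst c \<noteq> 0"
  defines "succ_cfg \<equiv> next_config (ladder_pfa T D) w"
  shows "runtime_potential T (length w) (succ_cfg c True)
           + runtime_potential T (length w) (succ_cfg c False) + 2
           \<le> 2 * runtime_potential T (length w) c"
proof -
  obtain q x where c: "c = (q, x)" by force
  have "q \<noteq> 0" using \<open>fst c \<noteq> 0\<close> by (simp add: c)
  from wf[unfolded c] this show ?thesis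
    unfolding c succ_cfg_def
    by (cases rule: next_config_ladder_cases)
       (use \<open>0 < T\<close> in \<open>auto simp: runtime_potential_def Let_def algebra_simps\<close>)
qed

lemma halt_within_ladder_le:
  fixes w :: "'a list"
  defines "N \<equiv> real (length w) + 1"
  assumes "0 < T"
  shows "halt_within (ladder_pfa T D) w k \<le> (2 * N + real k) / ((2 * N + 1) * N ^ T)"
proof -
  define Z where "Z = (2 * N + 1) * N ^ T"
  have "0 < Z"
    by (simp add: Z_def N_def)
  have "halt_within (ladder_pfa T D) w k
      \<le> halt_potential T (length w) (init (ladder_pfa T D :: 'a pfa), 0) / Z + real k * (1 / Z)"
  proof (rule halt_within_le_potential[OF valid_ladder_pfa])
    fix c
    assume wf: "wf_config (ladder_pfa T D) w c"
    then show "0 \<le> halt_potential T (length w) c / Z"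
      using halt_potential_nonneg[OF wf] \<open>0 < Z\<close> by simp
    show "1 \<le> halt_potential T (length w) c / Z" if "fst c \<in> halting (ladder_pfa T D)"
      using that \<open>0 < Z\<close> by (simp add: halt_potential_def Z_def N_def)
    show "halt_potential T (length w) (next_config (ladder_pfa T D) w c True) / Z
        + halt_potential T (length w) (next_config (ladder_pfa T D) w c False) / Z
        \<le> 2 * (halt_potential T (length w) c / Z + 1 / Z)"
      if "fst c \<notin> halting (ladder_pfa T D)"
    proof -
      have "(halt_potential T (length w) (next_config (ladder_pfa T D) w c True)
          + halt_potential T (length w) (next_config (ladder_pfa T D) w c False)) / Z
          \<le> (2 * halt_potential T (length w) c + 2) / Z"
        using halt_potential_drift[OF \<open>0 < T\<close> wf] that \<open>0 < Z\<close> by (simp add: divide_right_mono)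
      then show ?thesis
        by (simp add: add_divide_distrib distrib_left)
    qed
  qed (use \<open>0 < Z\<close> in simp)
  then show ?thesis
    by (simp add: halt_potential_def Z_def N_def add_divide_distrib)
qed

lemma expected_runtime_ladder_le:
  fixes w :: "'a list"
  defines "N \<equiv> real (length w) + 1"
  assumes "0 < T"
  shows "expected_runtime (ladder_pfa T D) w \<le> ennreal (walk_slope N T * N - N + real D + 2)"
proof -
  have "expected_runtime (ladder_pfa T D) w
      \<le> ennreal (runtime_potential T (length w) (init (ladder_pfa T D :: 'a pfa), 0))"
    using valid_ladder_pfa runtime_potential_nonneg runtime_potential_drift[OF \<open>0 < T\<close>]
    by (rule expected_runtime_le_potential) simp_all
  then show ?thesis
    by (simp add: runtime_potential_def N_def Let_def algebra_simps)
qed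

lemma run_ladder_delay:
  "k \<le> D \<Longrightarrow> run (ladder_pfa T D) w k = return_pmf (2 + 2 * T + D - k, 0)"
proof (induction k)
  case 0
  then show ?case by simp
next
  case (Suc k)
  define q where "q = 2 + 2 * T + D - k"
  have "2 + 2 * T < q" "q \<le> 2 + 2 * T + D"
    using Suc.prems by (auto simp: q_def)
  then have "next_config (ladder_pfa T D) w (q, 0) = (\<lambda>_. (q - 1, 0))"
    by (simp add: fun_eq_iff next_config_ladder_delay)
  then have "step (ladder_pfa T D) w (q, 0) = return_pmf (q - 1, 0)"
    using \<open>2 + 2 * T < q\<close> by (simp add: step_nonhalting)
  then show ?case
    using Suc by (simp add: q_def bind_return_pmf)
qed

lemma halt_within_ladder_delay: "k \<le> D \<Longrightarrow> halt_within (ladder_pfa T D) w k = 0"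
  by (simp add: run_ladder_delay halt_within_def)

lemma expected_runtime_ladder_poly:
  fixes w :: "'a list"
  assumes "0 < T" and "1 \<le> length w"
  shows "expected_runtime (ladder_pfa T D) w
           \<le> ennreal (((2 * real T + 1) * 2 ^ (T + 1) + real D + 2) * real (length w) ^ (T + 1))"
proof -
  define n where "n = real (length w)"
  define N where "N = n + 1"
  have "1 \<le> n" "1 \<le> N" "N \<le> 2 * n"
    using assms(2) by (simp_all add: n_def N_def)
  have "walk_slope N T * N \<le> (2 * real T + 1) * N ^ T * N"
    using walk_slope_le[OF \<open>1 \<le> N\<close>, of T] \<open>1 \<le> N\<close> by (simp add: mult_right_mono)
  also have "\<dots> = (2 * real T + 1) * N ^ (T + 1)"
    by simp
  also have "\<dots> \<le> (2 * real T + 1) * (2 * n) ^ (T + 1)"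
    using \<open>1 \<le> N\<close> \<open>N \<le> 2 * n\<close> by (intro mult_left_mono power_mono) auto
  finally have slope: "walk_slope N T * N \<le> (2 * real T + 1) * 2 ^ (T + 1) * n ^ (T + 1)"
    by (simp add: power_mult_distrib mult_ac)
  have "real D + 2 \<le> (real D + 2) * n ^ (T + 1)"
    using one_le_power[OF \<open>1 \<le> n\<close>, of "T + 1"] by (simp add: mult_le_cancel_left1)
  with slope \<open>1 \<le> N\<close>
  have "walk_slope N T * N - N + real D + 2 \<le> ((2 * real T + 1) * 2 ^ (T + 1) + real D + 2) * n ^ (T + 1)"
    by (simp add: algebra_simps)
  then show ?thesis
    using expected_runtime_ladder_le[OF \<open>0 < T\<close>, where w = w and D = D]
    by (simp add: n_def N_def order_trans[OF _ ennreal_leI])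
qed

lemma halting_bound_le_eps:
  fixes n m T :: nat and K eps :: real
  assumes "0 < T" "0 < eps" "0 \<le> K"
    and "(1 + K) / eps \<le> real n" and "real m \<le> K * real n ^ T"
  shows "(2 * (real n + 1) + real m) / ((2 * (real n + 1) + 1) * (real n + 1) ^ T) \<le> eps"
proof -
  define N where "N = real n + 1"
  have "1 \<le> N" "N \<le> N ^ T"
    using \<open>0 < T\<close> by (simp_all add: N_def power_increasing[of 1 T, simplified])
  have "1 + K \<le> eps * N"
    using assms(2,4) by (simp add: N_def pos_divide_le_eq mult.commute algebra_simps)
  have "K * real n ^ T \<le> K * N ^ T"
    using \<open>0 \<le> K\<close> by (intro mult_left_mono power_mono) (simp_all add: N_def)
  then have "real m \<le> K * N ^ T"
    using assms(5) by linarith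
  then have "2 * N + real m \<le> (2 + K) * N ^ T"
    using \<open>N \<le> N ^ T\<close> by (simp add: distrib_right)
  also have "\<dots> \<le> 2 * (1 + K) * N ^ T"
    using \<open>0 \<le> K\<close> \<open>1 \<le> N\<close> by (intro mult_right_mono) simp_all
  also have "\<dots> \<le> 2 * (eps * N) * N ^ T"
    using \<open>1 + K \<le> eps * N\<close> \<open>1 \<le> N\<close> by (intro mult_right_mono mult_left_mono) simp_all
  also have "\<dots> \<le> eps * ((2 * N + 1) * N ^ T)"
    using \<open>0 < eps\<close> \<open>1 \<le> N\<close> by (simp add: algebra_simps)
  finally show ?thesis
    using \<open>1 \<le> N\<close> by (simp add: N_def[symmetric] pos_divide_le_eq mult.commute)
qed

lemma halt_before_ladder_le:
  fixes f :: "nat \<Rightarrow> int" and w :: "'a list"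
  assumes "0 < T" "0 < eps" "0 \<le> K"
    and small: "\<And>n. n < N \<Longrightarrow> f n \<le> int D"
    and large: "\<And>n. N \<le> n \<Longrightarrow> real_of_int (f n) \<le> K * real n ^ T"
    and "(1 + K) / eps \<le> real N"
  shows "halt_before (ladder_pfa T D) w (f (length w)) \<le> eps"
proof (cases "f (length w) \<le> 0")
  case True
  then show ?thesis
    using \<open>0 < eps\<close> by (simp add: halt_before_def)
next
  case False
  define m where "m = nat (f (length w)) - 1"
  have halt_before: "halt_before (ladder_pfa T D) w (f (length w)) = halt_within (ladder_pfa T D) w m"
    using False by (simp add: halt_before_def m_def)
  show ?thesis
  proof (cases "length w < N")
    case True
    then have "m \<le> D"
      using small[of "length w"] by (simp add: m_def)
    then show ?thesis
      using \<open>0 < eps\<close> by (simp add: halt_before halt_within_ladder_delay)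
  next
    case False
    have "(1 + K) / eps \<le> real (length w)"
      using False \<open>(1 + K) / eps \<le> real N\<close> by linarith
    moreover have "real m \<le> K * real (length w) ^ T"
      using large[of "length w"] False \<open>\<not> f (length w) \<le> 0\<close> by (simp add: m_def of_nat_diff)
    ultimately show ?thesis
      unfolding halt_before
      using halt_within_ladder_le[OF \<open>0 < T\<close>] halting_bound_le_eps[OF assms(1-3)] order_trans
      by blast
  qed
qed

theorem lemma1:
  fixes t :: int and f :: "nat \<Rightarrow> int" and eps :: real
  assumes "t > 0"
    and "(\<lambda>n. real_of_int (f n)) \<in> O(\<lambda>n. real n ^ nat t)"
    and "eps > 0"
  shows "\<exists>M :: ('a::finite) pfa. valid_pfa M \<and>
           (\<exists>c N. \<forall>w :: 'a list. length w \<ge> N \<longrightarrow>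
                expected_runtime M w \<le> ennreal (c * real (length w) ^ (nat t + 1))) \<and>
           (\<forall>w :: 'a list. halt_before M w (f (length w)) \<le> eps)"
proof -
  define T where "T = nat t"
  have "0 < T"
    using assms(1) by (simp add: T_def)
  obtain K N0 where "0 < K" and N0: "\<And>n. N0 \<le> n \<Longrightarrow> \<bar>real_of_int (f n)\<bar> \<le> K * real n ^ T"
    using assms(2) unfolding bigo_def T_def eventually_at_top_linorder by auto
  define N where "N = max N0 (nat \<lceil>(1 + K) / eps\<rceil>)"
  define D where "D = (\<Sum>n<N. nat (f n))"
  have small: "f n \<le> int D" if "n < N" for n
    unfolding D_def nat_le_iff[symmetric] using that by (intro member_le_sum) auto
  have large: "real_of_int (f n) \<le> K * real n ^ T" if "N \<le> n" for n
    using N0[of n] that by (simp add: N_def)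
  have "(1 + K) / eps \<le> real N"
    using real_nat_ceiling_ge[of "(1 + K) / eps"] by (simp add: N_def)
  then have "halt_before (ladder_pfa T D) w (f (length w)) \<le> eps" for w :: "'a list"
    using \<open>0 < K\<close> small large by (intro halt_before_ladder_le[OF \<open>0 < T\<close> assms(3)]) auto
  moreover have "expected_runtime (ladder_pfa T D) w
      \<le> ennreal (((2 * real T + 1) * 2 ^ (T + 1) + real D + 2) * real (length w) ^ (nat t + 1))"
    if "1 \<le> length w" for w :: "'a list"
    using expected_runtime_ladder_poly[OF \<open>0 < T\<close> that] by (simp add: T_def)
  ultimately show ?thesis
    using valid_ladder_pfa by blast
qed

end
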